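(* Let $X\subseteq\mathcal A^{\mathbb Z}$ be a subshift generated by an everywhere growing directive sequence $\overleftarrow\sigma=(\sigma_n:\mathcal A_{n+1}^*\to\mathcal A_n^* )_{n\ge0}$ with $\mathcal A_0=\mathcal A$ and of finite alphabet rank. Assume that for every $n\ge0$ the incidence matrix $M(\sigma_n)$ is invertible over $\mathbb R$. Then any shift-invariant measure $\mu$ on $X$ is determined by the values $\mu([a])$, $a\in\mathcal A$; i.e. two invariant measures $\mu,\mu'$ on $X$ with $\mu([a])=\mu'([a])$ for all $a\in\mathcal A$ are equal.
   Context: Directive sequence: non-erasing monoid morphisms $\sigma_n:\mathcal A_{n+1}^*\to\mathcal A_n^*$ over finite alphabets, $\sigma_{[0,n)}=\sigma_0\circ\cdots\circ\sigma_{n-1}$; it generates the subshift of all $\mathbf x\in\mathcal A_0^{\mathbb Z}$ whose finite factors are factors of some $\sigma_{[0,n)}(a)$, $a\in\mathcal A_n$. Everywhere growing: $\min_{a\in\mathcal A_n}|\sigma_{[0,n)}(a)|\to\infty$. Finite alphabet rank: the cardinalities $\mathrm{card}(\mathcal A_n)$ are bounded. Incidence matrix $M(\sigma)=(|\sigma(a)|_b)_{b\in\mathcal B,a\in\mathcal A}$. $[a]=\{\mathbf x:x_1=a\}$. *)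

theory Defs
  imports "HOL-Probability.Probability" "Jordan_Normal_Form.Matrix" "HOL-Library.Sublist"
begin

text \<open>Alphabets are finite sets of natural numbers; a morphism
  sigma_n : A_{n+1}^* -> A_n^* is given by its values on letters.\<close>

type_synonym directive = "nat \<Rightarrow> nat \<Rightarrow> nat list"

definition morphism_on :: "nat set \<Rightarrow> nat set \<Rightarrow> (nat \<Rightarrow> nat list) \<Rightarrow> bool" where
  "morphism_on Src Tgt s \<longleftrightarrow> (\<forall>a\<in>Src. s a \<noteq> [] \<and> set (s a) \<subseteq> Tgt)"

definition directive_seq :: "(nat \<Rightarrow> nat set) \<Rightarrow> directive \<Rightarrow> bool" where
  "directive_seq A \<sigma> \<longleftrightarrow> (\<forall>n. finite (A n) \<and> A n \<noteq> {} \<and> morphism_on (A (Suc n)) (A n) (\<sigma> n))"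

text \<open>sigma_[0,n) = sigma_0 o ... o sigma_{n-1}, applied to a letter.\<close>
fun sigma_comp :: "directive \<Rightarrow> nat \<Rightarrow> nat \<Rightarrow> nat list" where
  "sigma_comp \<sigma> 0 a = [a]"
| "sigma_comp \<sigma> (Suc n) a = concat (map (sigma_comp \<sigma> n) (\<sigma> n a))"

definition everywhere_growing :: "(nat \<Rightarrow> nat set) \<Rightarrow> directive \<Rightarrow> bool" where
  "everywhere_growing A \<sigma> \<longleftrightarrow>
     filterlim (\<lambda>n. Min ((\<lambda>a. length (sigma_comp \<sigma> n a)) ` A n)) at_top sequentially"

definition finite_alphabet_rank :: "(nat \<Rightarrow> nat set) \<Rightarrow> bool" where
  "finite_alphabet_rank A \<longleftrightarrow> (\<exists>K. \<forall>n. card (A n) \<le> K)"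

definition incidence_mat :: "nat set \<Rightarrow> nat set \<Rightarrow> (nat \<Rightarrow> nat list) \<Rightarrow> real mat" where
  "incidence_mat Src B s = mat (card B) (card Src)
     (\<lambda>(i, j). real (count_list (s (sorted_list_of_set Src ! j)) (sorted_list_of_set B ! i)))"

definition generated_subshift :: "(nat \<Rightarrow> nat set) \<Rightarrow> directive \<Rightarrow> (int \<Rightarrow> nat) set" where
  "generated_subshift A \<sigma> = {x. (\<forall>i. x i \<in> A 0) \<and>
     (\<forall>i j. i \<le> j \<longrightarrow> (\<exists>n. \<exists>a\<in>A n. sublist (map x [i..j]) (sigma_comp \<sigma> n a)))}"

definition shift :: "(int \<Rightarrow> nat) \<Rightarrow> (int \<Rightarrow> nat)" where
  "shift x = (\<lambda>i. x (i + 1))"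

definition full_shift_M :: "(int \<Rightarrow> nat) measure" where
  "full_shift_M = (\<Pi>\<^sub>M i\<in>(UNIV::int set). count_space (UNIV::nat set))"

definition invariant_measure_on :: "(int \<Rightarrow> nat) set \<Rightarrow> (int \<Rightarrow> nat) measure \<Rightarrow> bool" where
  "invariant_measure_on X \<mu> \<longleftrightarrow>
     sets \<mu> = sets full_shift_M \<and> prob_space \<mu> \<and>
     (AE x in \<mu>. x \<in> X) \<and> distr \<mu> \<mu> shift = \<mu>"

definition cyl :: "nat \<Rightarrow> (int \<Rightarrow> nat) set" where
  "cyl a = {x. x 1 = a}"

end

theory Submission
  imports Defs
begin

(* Fix a level n. Invertibility of the incidence matrices of sigma_0, ..., sigma_(n-1) yields
   weights y on A_0 such that, for every b in A_n, the y-weight of sigma_[0,n)(b) is the number of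
   occurrences of a given word w in it. A window of length L of a point of X is, up to two partial
   blocks, a concatenation of blocks sigma_[0,n)(b); occurrences of w across block boundaries are
   at most |w| per block. Hence its y-weight differs from its number of occurrences of w by at most
   L |w| / min_b |sigma_[0,n)(b)| + O(1). Integrating against an invariant measure mu and letting
   L grow gives |mu[w] - sum_a y_a mu[a]| <= |w| / min_b |sigma_[0,n)(b)|, so two invariant
   measures agreeing on letters differ on [w] by at most twice this bound, which tends to 0 as the
   sequence is everywhere growing. An invariant measure is determined by its cylinder values. *)

section \<open>Occurrences of a word\<close>

fun factor_count :: "'a list \<Rightarrow> 'a list \<Rightarrow> nat" where
  "factor_count w [] = 0"
| "factor_count w (a # u) = (if prefix w (a # u) then 1 else 0) + factor_count w u"

lemma factor_count_singleton: "factor_count [a] u = count_list u a"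
  by (induction u) auto

lemma factor_count_le_length: "factor_count w u \<le> length u"
  by (induction u) auto

lemma of_nat_factor_count:
  "of_nat (factor_count w u) = (\<Sum>k<length u. if prefix w (drop k u) then 1 else (0::'b::semiring_1))"
  by (induction u) (simp_all del: sum.lessThan_Suc add: sum.lessThan_Suc_shift)

lemma factor_count_append_ge: "factor_count w xs + factor_count w ys \<le> factor_count w (xs @ ys)"
proof (induction xs)
  case (Cons a xs)
  then show ?case using prefix_prefix[of w "a # xs" ys] by auto
qed simp

lemma factor_count_append_le:
  "factor_count w (xs @ ys) \<le> factor_count w xs + factor_count w ys + min (length xs) (length w)"
proof (induction xs)
  case (Cons a xs)
  have "prefix w (a # xs)" if "prefix w (a # xs @ ys)" "length w \<le> length (a # xs)"
    using that by (metis append_Cons prefix_length_prefix prefix_append prefix_order.refl)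
  with Cons show ?case by (cases "length w \<le> length (a # xs)") (auto simp: min_def split: if_splits)
qed simp

lemma factor_count_concat:
  "(\<Sum>b\<leftarrow>v. factor_count w (f b)) \<le> factor_count w (concat (map f v))"
  "factor_count w (concat (map f v)) \<le> (\<Sum>b\<leftarrow>v. factor_count w (f b)) + length v * length w"
proof (induction v)
  case (Cons b v)
  { case 1 show ?case using Cons(1) factor_count_append_ge[of w "f b" "concat (map f v)"] by simp }
  { case 2 show ?case using Cons(2) factor_count_append_le[of w "f b" "concat (map f v)"] by simp }
qed simp_all

lemma prefix_concat_decomp:
  "prefix u (concat (map f v)) \<Longrightarrow> \<forall>b\<in>set v. length (f b) \<le> R \<Longrightarrow>
   \<exists>v' s. u = concat (map f v') @ s \<and> set v' \<subseteq> set v \<and> length s \<le> R"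
proof (induction v arbitrary: u)
  case (Cons b v)
  from Cons.prems(1) consider "prefix u (f b)" | us where "u = f b @ us" "prefix us (concat (map f v))"
    by (auto simp: prefix_append)
  then show ?case
  proof cases
    case 1
    then have "length u \<le> R" using Cons.prems(2) prefix_length_le by fastforce
    then show ?thesis by (intro exI[of _ "[]"] exI[of _ u]) auto
  next
    case 2
    obtain v' s where "us = concat (map f v') @ s" "set v' \<subseteq> set v" "length s \<le> R"
      using Cons.IH[OF 2(2)] Cons.prems(2) by auto
    with 2 show ?thesis by (intro exI[of _ "b # v'"] exI[of _ s]) auto
  qed
qed simp

lemma sublist_concat_decomp:
  "sublist u (concat (map f v)) \<Longrightarrow> \<forall>b\<in>set v. length (f b) \<le> R \<Longrightarrow>
   \<exists>p v' s. u = p @ concat (map f v') @ s \<and> set v' \<subseteq> set v \<and> length p \<le> R \<and> length s \<le> R"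
proof (induction v arbitrary: u)
  case (Cons b v)
  from Cons.prems(1) consider "sublist u (f b)" | "sublist u (concat (map f v))"
    | p us where "u = p @ us" "suffix p (f b)" "prefix us (concat (map f v))"
    by (auto simp: sublist_append)
  then show ?case
  proof cases
    case 1
    then have "length u \<le> R" using Cons.prems(2) sublist_length_le by fastforce
    then show ?thesis by (intro exI[of _ u] exI[of _ "[]"]) auto
  next
    case 2
    with Cons show ?thesis by fastforce
  next
    case 3
    with Cons.prems(2) obtain v' s where "us = concat (map f v') @ s" "set v' \<subseteq> set v" "length s \<le> R"
      using prefix_concat_decomp[of us f v R] by auto
    moreover have "length p \<le> R" using 3 Cons.prems(2) suffix_length_le by fastforce
    ultimately show ?thesis using 3 by (intro exI[of _ p] exI[of _ v'] exI[of _ s]) auto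
  qed
qed simp

lemma abs_sum_list_map_le: "\<forall>a\<in>set u. \<bar>y a\<bar> \<le> Y \<Longrightarrow> \<bar>sum_list (map y u)\<bar> \<le> Y * length u"
  for y :: "'a \<Rightarrow> real"
  by (induction u) (auto simp: algebra_simps abs_le_iff)

(* The weights y count the occurrences of w inside each block f b; in a factor of a concatenation
   of blocks they miss only the occurrences straddling block boundaries (at most length w per
   block) and those in the two incomplete blocks at the ends. *)
lemma factor_count_approx:
  fixes f :: "'b \<Rightarrow> 'a list" and y :: "'a \<Rightarrow> real" and Y :: real
  assumes rel: "\<forall>b\<in>B. sum_list (map y (f b)) = real (factor_count w (f b))"
    and len: "\<forall>b\<in>B. Lm \<le> length (f b) \<and> length (f b) \<le> R" and Lm: "0 < Lm"
    and v: "set v \<subseteq> B" and u: "sublist u (concat (map f v))"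
    and Y: "0 \<le> Y" and y: "\<forall>a\<in>set u. \<bar>y a\<bar> \<le> Y"
  shows "\<bar>real (factor_count w u) - sum_list (map y u)\<bar>
           \<le> length u * length w / Lm + 2 * (R + length w + Y * R)"
proof -
  obtain p v' s where dec: "u = p @ concat (map f v') @ s" "set v' \<subseteq> B" "length p \<le> R" "length s \<le> R"
    using sublist_concat_decomp[OF u] len v by (metis subset_iff)
  define M where "M = concat (map f v')"
  define \<Sigma> where "\<Sigma> = (\<Sum>b\<leftarrow>v'. factor_count w (f b))"
  have fc_u: "factor_count w p + factor_count w M + factor_count w s \<le> factor_count w u"
    "factor_count w u \<le> factor_count w p + factor_count w M + factor_count w s + 2 * length w"
    using factor_count_append_ge[of w p "M @ s"] factor_count_append_ge[of w M s]
      factor_count_append_le[of w p "M @ s"] factor_count_append_le[of w M s]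
    unfolding dec(1) M_def by linarith+
  have fc_M: "\<Sigma> \<le> factor_count w M" "factor_count w M \<le> \<Sigma> + length v' * length w"
    using factor_count_concat[of w f v'] unfolding \<Sigma>_def M_def by auto
  have fc_ps: "factor_count w p \<le> R" "factor_count w s \<le> R"
    using factor_count_le_length[of w p] factor_count_le_length[of w s] dec by linarith+
  have weight_M: "sum_list (map y M) = real \<Sigma>"
    using rel dec(2) unfolding M_def \<Sigma>_def
    by (induction v') auto
  have weight_le: "\<bar>sum_list (map y q)\<bar> \<le> Y * R" if "set q \<subseteq> set u" "length q \<le> R" for q
  proof -
    have "\<bar>sum_list (map y q)\<bar> \<le> Y * length q"
      using y that(1) by (intro abs_sum_list_map_le) blast
    also have "\<dots> \<le> Y * R" using Y that(2) by (simp add: mult_left_mono)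
    finally show ?thesis .
  qed
  have weight_ps: "\<bar>sum_list (map y p)\<bar> \<le> Y * R" "\<bar>sum_list (map y s)\<bar> \<le> Y * R"
    using dec by (auto intro!: weight_le)
  have "length v' * Lm \<le> length u"
  proof -
    have "length v' * Lm \<le> length M"
      unfolding M_def using len dec(2) by (induction v') (auto intro: add_mono)
    then show ?thesis unfolding dec(1) M_def by simp
  qed
  then have "real (length v') * Lm * length w \<le> length u * length w"
    by (metis of_nat_le_iff of_nat_mult mult_right_mono of_nat_0_le_iff)
  then have boundary: "real (length v' * length w) \<le> length u * length w / Lm"
    using Lm by (simp add: field_simps)
  have "sum_list (map y u) = sum_list (map y p) + \<Sigma> + sum_list (map y s)"
    using weight_M unfolding dec(1) M_def by simp
  then show ?thesis
    using fc_u[THEN of_nat_mono[where 'a=real]] fc_M[THEN of_nat_mono[where 'a=real]]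
      fc_ps[THEN of_nat_mono[where 'a=real]] weight_ps[unfolded abs_le_iff] boundary Y
      of_nat_0_le_iff[where 'a=real] divide_nonneg_nonneg[of "real (length u * length w)" "real Lm"]
    unfolding abs_le_iff of_nat_add of_nat_mult of_nat_numeral
    by (intro conjI) (simp_all add: mult_nonneg_nonneg; linarith)+
qed

section \<open>Letter weights from invertible incidence matrices\<close>

lemma directive_seqD:
  assumes "directive_seq A \<sigma>"
  shows "finite (A n)" "b \<in> A (Suc n) \<Longrightarrow> set (\<sigma> n b) \<subseteq> A n"
  using assms by (auto simp: directive_seq_def morphism_on_def)

lemma sigma_comp_factorization:
  assumes "directive_seq A \<sigma>" "n \<le> m" "c \<in> A m"
  shows "\<exists>v. set v \<subseteq> A n \<and> sigma_comp \<sigma> m c = concat (map (sigma_comp \<sigma> n) v)"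
  using assms(2,3)
proof (induction m arbitrary: c rule: dec_induct)
  case base
  then show ?case by (intro exI[of _ "[c]"]) simp
next
  case (step m)
  then have "\<forall>d\<in>A m. \<exists>v. set v \<subseteq> A n \<and> sigma_comp \<sigma> m d = concat (map (sigma_comp \<sigma> n) v)"
    by blast
  then have "\<exists>V. \<forall>d\<in>A m. set (V d) \<subseteq> A n \<and> sigma_comp \<sigma> m d = concat (map (sigma_comp \<sigma> n) (V d))"
    by (rule bchoice)
  then obtain V where V: "\<forall>d\<in>A m. set (V d) \<subseteq> A n \<and> sigma_comp \<sigma> m d = concat (map (sigma_comp \<sigma> n) (V d))"
    by blast
  have letters: "set (\<sigma> m c) \<subseteq> A m" using directive_seqD(2)[OF assms(1) step.prems] .
  have "sigma_comp \<sigma> (Suc m) c = concat (map (\<lambda>d. concat (map (sigma_comp \<sigma> n) (V d))) (\<sigma> m c))"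
    using V letters by (simp add: subset_iff cong: map_cong)
  also have "\<dots> = concat (map (sigma_comp \<sigma> n) (concat (map V (\<sigma> m c))))"
  proof -
    have "concat (map (\<lambda>d. concat (map g (V d))) xs) = concat (map g (concat (map V xs)))"
      for g :: "nat \<Rightarrow> nat list" and xs by (induction xs) auto
    then show ?thesis .
  qed
  finally have "sigma_comp \<sigma> (Suc m) c = concat (map (sigma_comp \<sigma> n) (concat (map V (\<sigma> m c))))" .
  moreover have "set (concat (map V (\<sigma> m c))) \<subseteq> A n" using V letters by fastforce
  ultimately show ?case by (intro exI conjI)
qed

lemma sum_list_map_eq_sum_count_of_nat:
  fixes f :: "'a \<Rightarrow> 'b::comm_semiring_1"
  assumes "finite X" "set xs \<subseteq> X"
  shows "sum_list (map f xs) = (\<Sum>x\<in>X. of_nat (count_list xs x) * f x)"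
  using assms(2)
proof (induction xs)
  case (Cons a xs)
  have "(\<Sum>x\<in>X. of_nat (count_list (a # xs) x) * f x)
      = (\<Sum>x\<in>X. of_nat (count_list xs x) * f x + (if a = x then f x else 0))"
    by (intro sum.cong) (auto simp: algebra_simps)
  also have "\<dots> = (\<Sum>x\<in>X. of_nat (count_list xs x) * f x) + f a"
    using Cons.prems assms(1) by (simp add: sum.distrib)
  finally show ?case using Cons by (simp add: add.commute)
qed simp

lemma invertible_mat_left_solvable:
  fixes M :: "'a::comm_ring_1 mat"
  assumes "invertible_mat M" "M \<in> carrier_mat m m"
  shows "\<exists>z. \<forall>j<m. (\<Sum>i<m. z i * M $$ (i, j)) = w j"
proof -
  obtain B where BM: "B * M = 1\<^sub>m (dim_row B)" and MB: "M * B = 1\<^sub>m m"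
    using assms unfolding invertible_mat_def inverts_mat_def by auto
  have "dim_row B = m" "dim_col B = m"
    using arg_cong[OF BM, of dim_col] arg_cong[OF MB, of dim_col] assms(2) by simp_all
  define z where "z i = (\<Sum>k<m. w k * B $$ (k, i))" for i
  have "(\<Sum>i<m. z i * M $$ (i, j)) = w j" if "j < m" for j
  proof -
    have "(\<Sum>i<m. z i * M $$ (i, j)) = (\<Sum>k<m. w k * (\<Sum>i<m. B $$ (k, i) * M $$ (i, j)))"
      unfolding z_def sum_distrib_left sum_distrib_right by (subst sum.swap) (simp add: mult.assoc)
    also have "\<dots> = (\<Sum>k<m. w k * (B * M) $$ (k, j))"
      using \<open>dim_row B = m\<close> \<open>dim_col B = m\<close> assms(2) that
      by (intro sum.cong refl arg_cong[where f="(*) _"]) (auto simp: scalar_prod_def atLeast0LessThan)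
    also have "\<dots> = (\<Sum>k<m. if k = j then w k else 0)"
      using BM \<open>dim_row B = m\<close> that by (intro sum.cong) auto
    also have "\<dots> = w j" using that by simp
    finally show ?thesis .
  qed
  then show ?thesis by blast
qed

lemma incidence_mat_solvable:
  fixes W :: "nat \<Rightarrow> real"
  assumes "finite Src" "finite Tgt" "morphism_on Src Tgt s"
    and "invertible_mat (incidence_mat Src Tgt s)"
  shows "\<exists>z. \<forall>b\<in>Src. sum_list (map z (s b)) = W b"
proof -
  define S0 where "S0 = sorted_list_of_set Tgt"
  define S1 where "S1 = sorted_list_of_set Src"
  define m where "m = card Tgt"
  have "card Src = m"
    using assms(4) unfolding invertible_mat_def square_mat.simps incidence_mat_def m_def by simp
  then have S: "distinct S0" "set S0 = Tgt" "length S0 = m" "distinct S1" "set S1 = Src" "length S1 = m"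
    using assms(1,2) unfolding S0_def S1_def m_def by auto
  have M: "incidence_mat Src Tgt s \<in> carrier_mat m m"
    using \<open>card Src = m\<close> unfolding incidence_mat_def m_def by simp
  obtain z where z: "\<forall>j<m. (\<Sum>i<m. z i * incidence_mat Src Tgt s $$ (i, j)) = W (S1 ! j)"
    using invertible_mat_left_solvable[OF assms(4) M, where w="\<lambda>j. W (S1 ! j)"] by blast
  have bij: "bij_betw ((!) S0) {..<m} Tgt" using S by (intro bij_betw_nth) auto
  define z' where "z' = z \<circ> inv_into {..<m} ((!) S0)"
  have "sum_list (map z' (s b)) = W b" if "b \<in> Src" for b
  proof -
    have "b \<in> set S1" using S(5) that by simp
    then obtain j where j: "j < m" "b = S1 ! j" using S(6) by (auto simp: in_set_conv_nth)
    have "sum_list (map z' (s b)) = (\<Sum>c\<in>Tgt. count_list (s b) c * z' c)"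
      using assms(2,3) that by (intro sum_list_map_eq_sum_count_of_nat) (auto simp: morphism_on_def)
    also have "\<dots> = (\<Sum>i<m. count_list (s b) (S0 ! i) * z' (S0 ! i))"
      by (rule sum.reindex_bij_betw[OF bij, symmetric])
    also have "\<dots> = (\<Sum>i<m. count_list (s b) (S0 ! i) * z i)"
      unfolding z'_def using bij_betw_inv_into_left[OF bij] by simp
    also have "\<dots> = (\<Sum>i<m. z i * incidence_mat Src Tgt s $$ (i, j))"
      using j S(3) \<open>card Src = m\<close> unfolding incidence_mat_def S0_def S1_def m_def
      by (intro sum.cong refl) (simp add: mult.commute)
    also have "\<dots> = W b" using z j(1) unfolding j(2) by blast
    finally show ?thesis .
  qed
  then show ?thesis by blast
qed

lemma sigma_comp_solvable:
  fixes W :: "nat \<Rightarrow> real"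
  assumes "directive_seq A \<sigma>" "\<forall>n. invertible_mat (incidence_mat (A (Suc n)) (A n) (\<sigma> n))"
  shows "\<exists>y. \<forall>b\<in>A n. sum_list (map y (sigma_comp \<sigma> n b)) = W b"
proof (induction n arbitrary: W)
  case 0
  show ?case by (intro exI[of _ W]) simp
next
  case (Suc n)
  have "morphism_on (A (Suc n)) (A n) (\<sigma> n)" using assms(1) by (simp add: directive_seq_def)
  then obtain z where z: "\<forall>b\<in>A (Suc n). sum_list (map z (\<sigma> n b)) = W b"
    using incidence_mat_solvable[OF directive_seqD(1,1)[OF assms(1)]] assms(2) by blast
  obtain y where y: "\<forall>c\<in>A n. sum_list (map y (sigma_comp \<sigma> n c)) = z c"
    using Suc.IH by blast
  have "sum_list (map y (sigma_comp \<sigma> (Suc n) b)) = W b" if "b \<in> A (Suc n)" for b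
  proof -
    have "sum_list (map y (sigma_comp \<sigma> (Suc n) b)) = sum_list (map z (\<sigma> n b))"
    proof -
      have "sum_list (map y (concat (map g xs))) = (\<Sum>c\<leftarrow>xs. sum_list (map y (g c)))"
        for g :: "nat \<Rightarrow> nat list" and xs by (induction xs) auto
      moreover have "(\<Sum>c\<leftarrow>\<sigma> n b. sum_list (map y (sigma_comp \<sigma> n c))) = sum_list (map z (\<sigma> n b))"
        using y directive_seqD(2)[OF assms(1) that] by (intro arg_cong[where f=sum_list] map_cong) auto
      ultimately show ?thesis by simp
    qed
    then show ?thesis using z that by simp
  qed
  then show ?case by blast
qed

section \<open>Windows and cylinders\<close>

definition initial_block :: "(int \<Rightarrow> 'a) \<Rightarrow> nat \<Rightarrow> 'a list" where
  "initial_block x L = map (\<lambda>i. x (int i)) [0..<L]"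

lemma length_initial_block [simp]: "length (initial_block x L) = L"
  by (simp add: initial_block_def)

lemma initial_block_prefix: "L \<le> L' \<Longrightarrow> prefix (initial_block x L) (initial_block x L')"
  unfolding initial_block_def by (metis map_append prefixI le_Suc_ex upt_add_eq_append zero_le)

lemma set_initial_block_generated_subshift:
  "x \<in> generated_subshift A \<sigma> \<Longrightarrow> set (initial_block x L) \<subseteq> A 0"
  by (auto simp: generated_subshift_def initial_block_def)

lemma initial_block_sublist_level:
  assumes ds: "directive_seq A \<sigma>" and x: "x \<in> generated_subshift A \<sigma>"
  shows "\<exists>v. set v \<subseteq> A n \<and> sublist (initial_block x L) (concat (map (sigma_comp \<sigma> n) v))"
proof -
  define K where "K = L + (\<Sum>k<n. \<Sum>c\<in>A k. length (sigma_comp \<sigma> k c))"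
  have short: "length (sigma_comp \<sigma> k c) < Suc K" if "k < n" "c \<in> A k" for k c
  proof -
    have "length (sigma_comp \<sigma> k c) \<le> (\<Sum>c\<in>A k. length (sigma_comp \<sigma> k c))"
      using that directive_seqD(1)[OF ds] by (intro member_le_sum) auto
    also have "\<dots> \<le> (\<Sum>k<n. \<Sum>c\<in>A k. length (sigma_comp \<sigma> k c))"
      using that by (intro member_le_sum) auto
    finally show ?thesis unfolding K_def by simp
  qed
  have "\<exists>m. \<exists>c\<in>A m. sublist (map x [0..int K]) (sigma_comp \<sigma> m c)"
    using x unfolding generated_subshift_def by simp
  moreover have "map x [0..int K] = initial_block x (Suc K)"
    unfolding initial_block_def by (rule nth_equalityI) (auto simp del: upt_Suc)
  ultimately obtain m c where c: "c \<in> A m" "sublist (initial_block x (Suc K)) (sigma_comp \<sigma> m c)"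
    by auto
  have "n \<le> m"
  proof (rule ccontr)
    assume "\<not> n \<le> m"
    then show False using short[of m c] sublist_length_le[OF c(2)] c(1) by simp
  qed
  then obtain v where v: "set v \<subseteq> A n" "sigma_comp \<sigma> m c = concat (map (sigma_comp \<sigma> n) v)"
    using sigma_comp_factorization[OF ds _ c(1)] by blast
  have "sublist (initial_block x L) (initial_block x (Suc K))"
    using initial_block_prefix[of L "Suc K"] by (auto simp: K_def intro: prefix_imp_sublist)
  then show ?thesis using c(2) v by (metis sublist_order.order_trans)
qed

definition cylinder :: "nat \<Rightarrow> 'a list \<Rightarrow> (int \<Rightarrow> 'a) set" where
  "cylinder k w = {x. \<forall>i<length w. x (int (k + i)) = w ! i}"

lemma cyl_eq_cylinder: "cyl a = cylinder 1 [a]"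
  by (auto simp: cyl_def cylinder_def)

lemma mem_cylinder_0_iff: "x \<in> cylinder 0 u \<longleftrightarrow> initial_block x (length u) = u"
proof
  assume "x \<in> cylinder 0 u"
  then show "initial_block x (length u) = u"
    by (intro nth_equalityI) (auto simp: cylinder_def initial_block_def)
next
  assume *: "initial_block x (length u) = u"
  have "x (int i) = u ! i" if "i < length u" for i
    using arg_cong[OF *, of "\<lambda>v. v ! i"] that by (simp add: initial_block_def)
  then show "x \<in> cylinder 0 u" by (simp add: cylinder_def)
qed

lemma prefix_drop_initial_block_iff:
  assumes "k < L"
  shows "prefix w (drop k (initial_block x L)) \<longleftrightarrow> k + length w \<le> L \<and> x \<in> cylinder k w"
proof
  assume *: "prefix w (drop k (initial_block x L))"
  then have "k + length w \<le> L" using prefix_length_le[OF *] assms by simp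
  from * obtain zs where zs: "drop k (initial_block x L) = w @ zs" by (auto simp: prefix_def)
  have "x (int (k + i)) = w ! i" if "i < length w" for i
  proof -
    have "w ! i = drop k (initial_block x L) ! i" unfolding zs using that by (simp add: nth_append)
    also have "\<dots> = x (int (k + i))"
      using that \<open>k + length w \<le> L\<close> by (simp add: initial_block_def)
    finally show ?thesis ..
  qed
  with \<open>k + length w \<le> L\<close>
  show "k + length w \<le> L \<and> x \<in> cylinder k w" by (simp add: cylinder_def)
next
  assume "k + length w \<le> L \<and> x \<in> cylinder k w"
  then have "take (length w) (drop k (initial_block x L)) = w"
    by (intro nth_equalityI) (auto simp: cylinder_def initial_block_def)
  then show "prefix w (drop k (initial_block x L))" by (metis take_is_prefix)
qed

lemma factor_count_initial_block:
  assumes "w \<noteq> []"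
  shows "real (factor_count w (initial_block x (N + length w - 1))) = (\<Sum>k<N. indicator (cylinder k w) x)"
proof -
  define L where "L = N + length w - 1"
  have "N \<le> L" using assms by (cases w) (simp_all add: L_def)
  have "real (factor_count w (initial_block x L))
      = (\<Sum>k<L. if prefix w (drop k (initial_block x L)) then 1 else 0)"
    by (simp add: of_nat_factor_count)
  also have "\<dots> = (\<Sum>k<L. if k < N \<and> x \<in> cylinder k w then 1 else 0)"
    using assms by (intro sum.cong refl) (auto simp: prefix_drop_initial_block_iff L_def)
  also have "\<dots> = (\<Sum>k<N. indicator (cylinder k w) x)"
    using \<open>N \<le> L\<close> by (intro sum.mono_neutral_cong_right) (auto simp: indicator_def)
  finally show ?thesis unfolding L_def .
qed

lemma space_full_shift_M [simp]: "space full_shift_M = UNIV"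
  by (simp add: full_shift_M_def space_PiM)

lemma measurable_coordinate [measurable]: "(\<lambda>x. x j) \<in> measurable full_shift_M (count_space UNIV)"
  unfolding full_shift_M_def by (rule measurable_component_singleton) simp

lemma sets_cylinder [measurable]: "cylinder k w \<in> sets full_shift_M"
proof -
  have "cylinder k w = {x \<in> space full_shift_M. \<forall>i<length w. x (int (k + i)) = w ! i}"
    by (auto simp: cylinder_def)
  also have "\<dots> \<in> sets full_shift_M" by measurable
  finally show ?thesis .
qed

lemma measurable_shift [measurable]: "shift \<in> measurable full_shift_M full_shift_M"
  unfolding shift_def[abs_def] full_shift_M_def by (rule measurable_PiM_single') auto

lemma funpow_shift_apply: "(shift ^^ d) x = (\<lambda>i. x (i + int d))"
  by (induction d) (auto simp: shift_def algebra_simps)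

lemma sets_rectangle: "finite J \<Longrightarrow> {x. \<forall>j\<in>J. x j \<in> F j} \<in> sets full_shift_M"
proof -
  assume "finite J"
  have "{x. \<forall>j\<in>J. x j \<in> F j} = prod_emb UNIV (\<lambda>_. count_space UNIV) J (Pi\<^sub>E J F)"
    by (auto simp: prod_emb_def PiE_iff)
  then show ?thesis
    using sets_PiM_I[of J UNIV F "\<lambda>_. count_space UNIV"] \<open>finite J\<close> by (simp add: full_shift_M_def)
qed

lemma funpow_shift_vimage_rectangle:
  assumes "finite J"
  obtains d U where "(shift ^^ d) -` {x. \<forall>j\<in>J. x j \<in> F j} = (\<Union>u\<in>U. cylinder 0 u)"
    and "\<forall>u\<in>U. length u = Suc (2 * d)"
proof -
  define d where "d = (\<Sum>j\<in>J. nat \<bar>j\<bar>)"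
  have "nat \<bar>j\<bar> \<le> d" if "j \<in> J" for j
    unfolding d_def using assms that by (intro member_le_sum) auto
  then have j: "0 \<le> j + int d" "nat (j + int d) < Suc (2 * d)" if "j \<in> J" for j
    using that by fastforce+
  define U where "U = {u. length u = Suc (2 * d) \<and> (\<forall>j\<in>J. u ! nat (j + int d) \<in> F j)}"
  have "x \<in> (shift ^^ d) -` {x. \<forall>j\<in>J. x j \<in> F j} \<longleftrightarrow> x \<in> (\<Union>u\<in>U. cylinder 0 u)" for x
  proof -
    have "x \<in> (\<Union>u\<in>U. cylinder 0 u) \<longleftrightarrow> initial_block x (Suc (2 * d)) \<in> U"
      by (auto simp: mem_cylinder_0_iff U_def)
    also have "\<dots> \<longleftrightarrow> (\<forall>j\<in>J. x (j + int d) \<in> F j)"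
      using j by (auto simp: U_def initial_block_def simp del: upt_Suc)
    finally show ?thesis by (simp add: funpow_shift_apply)
  qed
  moreover have "\<forall>u\<in>U. length u = Suc (2 * d)" by (simp add: U_def)
  ultimately show ?thesis by (intro that) blast+
qed

section \<open>Shift-invariant measures\<close>

lemma le_of_forall_nat_mult_le:
  fixes d a C :: real
  assumes "\<And>N::nat. real N * d \<le> real N * a + C"
  shows "d \<le> a"
proof (rule ccontr)
  assume "\<not> d \<le> a"
  obtain N :: nat where "C / (d - a) < N" using reals_Archimedean2 by blast
  then have "C < N * (d - a)" using \<open>\<not> d \<le> a\<close> by (simp add: field_simps)
  then show False using assms[of N] by (simp add: algebra_simps)
qed

lemma nonpos_of_le_divide_at_top:
  fixes f :: "nat \<Rightarrow> nat" and c d :: real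
  assumes f: "filterlim f at_top sequentially" and le: "\<And>n. 0 < f n \<Longrightarrow> d \<le> c / f n"
  shows "d \<le> 0"
proof -
  have "((\<lambda>n. c / real (f n)) \<longlongrightarrow> 0) sequentially"
    by (intro tendsto_divide_0[OF tendsto_const] filterlim_at_top_imp_at_infinity
        filterlim_compose[OF filterlim_real_sequentially f])
  moreover have "eventually (\<lambda>n. d \<le> c / real (f n)) sequentially"
    using f le unfolding filterlim_at_top by (auto elim!: allE[of _ 1] eventually_mono)
  ultimately show "d \<le> 0" by (rule tendsto_lowerbound) simp
qed

locale shift_invariant_measure =
  fixes X :: "(int \<Rightarrow> nat) set" and \<mu> :: "(int \<Rightarrow> nat) measure"
  assumes invariant: "invariant_measure_on X \<mu>"
begin

sublocale prob_space \<mu>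
  using invariant by (simp add: invariant_measure_on_def)

lemma sets_eq [measurable_cong]: "sets \<mu> = sets full_shift_M"
  using invariant by (simp add: invariant_measure_on_def)

lemma space_eq [simp]: "space \<mu> = UNIV"
  using sets_eq_imp_space_eq[OF sets_eq] by simp

lemma AE_in_X: "AE x in \<mu>. x \<in> X"
  using invariant by (simp add: invariant_measure_on_def)

lemma emeasure_funpow_shift_vimage:
  assumes "S \<in> sets full_shift_M"
  shows "emeasure \<mu> ((shift ^^ d) -` S) = emeasure \<mu> S"
  using assms
proof (induction d arbitrary: S)
  case (Suc d)
  have preimage: "shift -` S \<in> sets full_shift_M"
    using measurable_sets[OF measurable_shift Suc.prems] by simp
  have "(shift ^^ Suc d) -` S = (shift ^^ d) -` (shift -` S)"
    by (auto simp del: funpow.simps simp: funpow_shift_apply shift_def algebra_simps)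
  then have "emeasure \<mu> ((shift ^^ Suc d) -` S) = emeasure \<mu> (shift -` S)"
    using Suc.IH[OF preimage] by (simp only:)
  also have "\<dots> = emeasure (distr \<mu> \<mu> shift) S"
    using Suc.prems by (subst emeasure_distr) (auto simp: sets_eq)
  also have "\<dots> = emeasure \<mu> S"
    using invariant by (simp add: invariant_measure_on_def)
  finally show ?case .
qed simp

lemma measure_cylinder_shift: "measure \<mu> (cylinder k w) = measure \<mu> (cylinder 0 w)"
proof -
  have "cylinder k w = (shift ^^ k) -` cylinder 0 w"
    by (auto simp del: funpow.simps simp: funpow_shift_apply cylinder_def add.commute)
  then show ?thesis
    using emeasure_funpow_shift_vimage[OF sets_cylinder] by (simp add: measure_def)
qed

lemma measure_cyl: "measure \<mu> (cyl a) = measure \<mu> (cylinder 0 [a])"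
  unfolding cyl_eq_cylinder by (rule measure_cylinder_shift)

lemma integral_factor_count_initial_block:
  assumes "w \<noteq> []"
  shows "integrable \<mu> (\<lambda>x. real (factor_count w (initial_block x (N + length w - 1))))"
    "(\<integral>x. real (factor_count w (initial_block x (N + length w - 1))) \<partial>\<mu>) = N * measure \<mu> (cylinder 0 w)"
proof -
  have cyl: "integrable \<mu> (indicator (cylinder k w) :: _ \<Rightarrow> real)" for k
    by (intro integrable_real_indicator) (auto simp: sets_eq less_top[symmetric])
  show "integrable \<mu> (\<lambda>x. real (factor_count w (initial_block x (N + length w - 1))))"
    unfolding factor_count_initial_block[OF assms] using cyl by (rule Bochner_Integration.integrable_sum)
  have "(\<integral>x. real (factor_count w (initial_block x (N + length w - 1))) \<partial>\<mu>)
      = (\<Sum>k<N. measure \<mu> (cylinder k w))"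
    unfolding factor_count_initial_block[OF assms]
    by (simp only: Bochner_Integration.integral_sum[OF cyl] Bochner_Integration.integral_indicator
        space_eq Int_UNIV_right)
  also have "\<dots> = (\<Sum>k<N. measure \<mu> (cylinder 0 w))"
    by (intro sum.cong refl measure_cylinder_shift)
  finally show "(\<integral>x. real (factor_count w (initial_block x (N + length w - 1))) \<partial>\<mu>)
      = N * measure \<mu> (cylinder 0 w)" by (simp only: sum_constant card_lessThan)
qed

lemma emeasure_rectangle:
  assumes "finite J" "(shift ^^ d) -` {x. \<forall>j\<in>J. x j \<in> F j} = (\<Union>u\<in>U. cylinder 0 u)"
    and "\<forall>u\<in>U. length u = n"
  shows "emeasure \<mu> {x. \<forall>j\<in>J. x j \<in> F j} = (\<integral>\<^sup>+u. emeasure \<mu> (cylinder 0 u) \<partial>count_space U)"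
proof -
  have "emeasure \<mu> {x. \<forall>j\<in>J. x j \<in> F j} = emeasure \<mu> (\<Union>u\<in>U. cylinder 0 u)"
    using emeasure_funpow_shift_vimage[OF sets_rectangle[OF assms(1), of F], of d] unfolding assms(2)
    by (rule sym)
  also have "\<dots> = (\<integral>\<^sup>+u. emeasure \<mu> (cylinder 0 u) \<partial>count_space U)"
  proof (rule emeasure_UN_countable)
    show "disjoint_family_on (\<lambda>u. cylinder 0 u) U"
      using assms(3) by (auto simp: disjoint_family_on_def mem_cylinder_0_iff)
  qed (auto simp: sets_eq)
  finally show ?thesis .
qed

(* Integrating the pathwise bound over windows of length L = N + length w - 1 gives
   |N mu[w] - L Phi| <= alpha L + K; dividing by N and letting N grow removes K. *)
lemma measure_cylinder_approx:
  fixes y :: "nat \<Rightarrow> real" and \<alpha> K :: real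
  assumes w: "w \<noteq> []"
    and bound: "\<And>x L. x \<in> X \<Longrightarrow>
      \<bar>real (factor_count w (initial_block x L)) - (\<Sum>a\<in>S. y a * count_list (initial_block x L) a)\<bar> \<le> \<alpha> * L + K"
  shows "\<bar>measure \<mu> (cylinder 0 w) - (\<Sum>a\<in>S. y a * measure \<mu> (cylinder 0 [a]))\<bar> \<le> \<alpha>"
proof -
  define \<Phi> where "\<Phi> = (\<Sum>a\<in>S. y a * measure \<mu> (cylinder 0 [a]))"
  define C where "C = \<alpha> * (length w - 1) + K + (length w - 1) * \<bar>\<Phi>\<bar>"
  have "real N * \<bar>measure \<mu> (cylinder 0 w) - \<Phi>\<bar> \<le> real N * \<alpha> + C" for N
  proof -
    define L where "L = N + length w - 1"
    have L: "real L = real N + (length w - 1)" using w by (cases w) (simp_all add: L_def)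
    define F where "F x = real (factor_count w (initial_block x L))" for x
    define G where "G x = (\<Sum>a\<in>S. y a * real (factor_count [a] (initial_block x L)))" for x
    have F: "integrable \<mu> F" "integral\<^sup>L \<mu> F = N * measure \<mu> (cylinder 0 w)"
      using integral_factor_count_initial_block[OF w, of N] unfolding F_def L_def by auto
    have letter: "integrable \<mu> (\<lambda>x. real (factor_count [a] (initial_block x L)))"
      "(\<integral>x. real (factor_count [a] (initial_block x L)) \<partial>\<mu>) = L * measure \<mu> (cylinder 0 [a])" for a
      using integral_factor_count_initial_block[of "[a]" L] by simp_all
    have G: "integrable \<mu> G" "integral\<^sup>L \<mu> G = L * \<Phi>"
      unfolding G_def \<Phi>_def using letter
      by (simp_all add: Bochner_Integration.integral_sum sum_distrib_left mult.left_commute)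
    have "AE x in \<mu>. \<bar>F x - G x\<bar> \<le> \<alpha> * L + K"
      using AE_in_X by eventually_elim (use bound in \<open>simp add: F_def G_def factor_count_singleton\<close>)
    then have "(\<integral>x. \<bar>F x - G x\<bar> \<partial>\<mu>) \<le> (\<integral>x. \<alpha> * L + K \<partial>\<mu>)"
      using F G by (intro integral_mono_AE) auto
    then have "\<bar>integral\<^sup>L \<mu> F - integral\<^sup>L \<mu> G\<bar> \<le> \<alpha> * L + K"
      using integral_abs_bound[of \<mu> "\<lambda>x. F x - G x"] F G prob_space by simp
    then have approx: "\<bar>N * measure \<mu> (cylinder 0 w) - L * \<Phi>\<bar> \<le> \<alpha> * L + K"
      using F G by simp
    define t where "t = real (length w - 1)"
    have "real N * \<bar>measure \<mu> (cylinder 0 w) - \<Phi>\<bar> = \<bar>N * (measure \<mu> (cylinder 0 w) - \<Phi>)\<bar>"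
      by (simp add: abs_mult)
    also have "\<dots> = \<bar>(N * measure \<mu> (cylinder 0 w) - L * \<Phi>) + t * \<Phi>\<bar>"
      unfolding L t_def by (simp add: algebra_simps)
    also have "\<dots> \<le> \<bar>N * measure \<mu> (cylinder 0 w) - L * \<Phi>\<bar> + t * \<bar>\<Phi>\<bar>"
      using abs_triangle_ineq[of "N * measure \<mu> (cylinder 0 w) - L * \<Phi>" "t * \<Phi>"]
      by (simp add: abs_mult t_def)
    also have "\<dots> \<le> real N * \<alpha> + C"
      using approx unfolding C_def L t_def by (simp add: algebra_simps)
    finally show ?thesis .
  qed
  then show ?thesis unfolding \<Phi>_def by (rule le_of_forall_nat_mult_le)
qed

end

lemma shift_invariant_measure_eqI:
  assumes "shift_invariant_measure X \<mu>" "shift_invariant_measure X' \<mu>'"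
    and cylinders: "\<And>u. u \<noteq> [] \<Longrightarrow> measure \<mu> (cylinder 0 u) = measure \<mu>' (cylinder 0 u)"
  shows "\<mu> = \<mu>'"
proof -
  interpret \<mu>: shift_invariant_measure X \<mu> by fact
  interpret \<mu>': shift_invariant_measure X' \<mu>' by fact
  show ?thesis
  proof (rule measure_eqI_PiM_infinite[where I=UNIV and M="\<lambda>_. count_space UNIV"])
    show "sets \<mu> = sets (Pi\<^sub>M UNIV (\<lambda>_. count_space UNIV))" "sets \<mu>' = sets (Pi\<^sub>M UNIV (\<lambda>_. count_space UNIV))"
      using \<mu>.sets_eq \<mu>'.sets_eq by (simp_all add: full_shift_M_def)
    show "finite_measure \<mu>" by unfold_locales
  next
    fix J :: "int set" and F :: "int \<Rightarrow> nat set" assume "finite J"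
    have rectangle: "prod_emb UNIV (\<lambda>_. count_space UNIV) J (Pi\<^sub>E J F) = {x. \<forall>j\<in>J. x j \<in> F j}"
      by (auto simp: prod_emb_def PiE_iff)
    obtain d U where dU: "(shift ^^ d) -` {x. \<forall>j\<in>J. x j \<in> F j} = (\<Union>u\<in>U. cylinder 0 u)"
      "\<forall>u\<in>U. length u = Suc (2 * d)"
      using funpow_shift_vimage_rectangle[OF \<open>finite J\<close>] .
    have "emeasure \<mu> (cylinder 0 u) = emeasure \<mu>' (cylinder 0 u)" if "u \<in> U" for u
    proof -
      have "u \<noteq> []" using dU(2) that by fastforce
      then show ?thesis using cylinders by (simp add: \<mu>.emeasure_eq_measure \<mu>'.emeasure_eq_measure)
    qed
    then show "emeasure \<mu> (prod_emb UNIV (\<lambda>_. count_space UNIV) J (Pi\<^sub>E J F))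
             = emeasure \<mu>' (prod_emb UNIV (\<lambda>_. count_space UNIV) J (Pi\<^sub>E J F))"
      unfolding rectangle \<mu>.emeasure_rectangle[OF \<open>finite J\<close> dU] \<mu>'.emeasure_rectangle[OF \<open>finite J\<close> dU]
      by (intro nn_integral_cong) simp
  qed
qed

lemma cylinder_frequency_approx:
  assumes ds: "directive_seq A \<sigma>"
    and invertible: "\<forall>n. invertible_mat (incidence_mat (A (Suc n)) (A n) (\<sigma> n))"
    and w: "w \<noteq> []" and Lm: "0 < Lm" "\<forall>b\<in>A n. Lm \<le> length (sigma_comp \<sigma> n b)"
  obtains y where "\<And>\<mu>. shift_invariant_measure (generated_subshift A \<sigma>) \<mu> \<Longrightarrow>
    \<bar>measure \<mu> (cylinder 0 w) - (\<Sum>a\<in>A 0. y a * measure \<mu> (cylinder 0 [a]))\<bar> \<le> length w / Lm"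
proof -
  obtain y where y: "\<forall>b\<in>A n. sum_list (map y (sigma_comp \<sigma> n b)) = real (factor_count w (sigma_comp \<sigma> n b))"
    using sigma_comp_solvable[OF ds invertible, of n "\<lambda>b. real (factor_count w (sigma_comp \<sigma> n b))"]
    by blast
  define R where "R = (\<Sum>b\<in>A n. length (sigma_comp \<sigma> n b))"
  define Y where "Y = (\<Sum>a\<in>A 0. \<bar>y a\<bar>)"
  have lengths: "\<forall>b\<in>A n. Lm \<le> length (sigma_comp \<sigma> n b) \<and> length (sigma_comp \<sigma> n b) \<le> R"
    using Lm(2) directive_seqD(1)[OF ds] unfolding R_def by (auto intro: member_le_sum)
  have "\<bar>real (factor_count w (initial_block x L)) - (\<Sum>a\<in>A 0. y a * count_list (initial_block x L) a)\<bar>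
      \<le> length w / Lm * L + 2 * (R + length w + Y * R)"
    if x: "x \<in> generated_subshift A \<sigma>" for x L
  proof -
    obtain v where v: "set v \<subseteq> A n" "sublist (initial_block x L) (concat (map (sigma_comp \<sigma> n) v))"
      using initial_block_sublist_level[OF ds x] by blast
    have letters: "set (initial_block x L) \<subseteq> A 0"
      using set_initial_block_generated_subshift[OF x] .
    have "\<forall>a\<in>set (initial_block x L). \<bar>y a\<bar> \<le> Y"
      using letters directive_seqD(1)[OF ds] unfolding Y_def
      by (auto intro: member_le_sum[where f="\<lambda>a. \<bar>y a\<bar>"])
    then have "\<bar>real (factor_count w (initial_block x L)) - sum_list (map y (initial_block x L))\<bar>
        \<le> L * length w / Lm + 2 * (R + length w + Y * R)"
      using factor_count_approx[OF y lengths Lm(1) v] by (simp add: Y_def sum_nonneg)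
    moreover have "sum_list (map y (initial_block x L)) = (\<Sum>a\<in>A 0. y a * count_list (initial_block x L) a)"
      using sum_list_map_eq_sum_count_of_nat[OF directive_seqD(1)[OF ds] letters] by (simp add: mult.commute)
    ultimately show ?thesis by (simp add: field_simps)
  qed
  then show ?thesis
    using that shift_invariant_measure.measure_cylinder_approx[OF _ w] by blast
qed

lemma generated_subshift_measure_cylinder_eq:
  assumes ds: "directive_seq A \<sigma>" and growing: "everywhere_growing A \<sigma>"
    and invertible: "\<forall>n. invertible_mat (incidence_mat (A (Suc n)) (A n) (\<sigma> n))"
    and \<mu>: "shift_invariant_measure (generated_subshift A \<sigma>) \<mu>"
    and \<mu>': "shift_invariant_measure (generated_subshift A \<sigma>) \<mu>'"
    and letters: "\<forall>a\<in>A 0. measure \<mu> (cylinder 0 [a]) = measure \<mu>' (cylinder 0 [a])"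
    and "u \<noteq> []"
  shows "measure \<mu> (cylinder 0 u) = measure \<mu>' (cylinder 0 u)"
proof -
  define Lm where "Lm n = Min ((\<lambda>a. length (sigma_comp \<sigma> n a)) ` A n)" for n
  have "\<bar>measure \<mu> (cylinder 0 u) - measure \<mu>' (cylinder 0 u)\<bar> \<le> 2 * length u / Lm n" if "0 < Lm n" for n
  proof -
    have "\<forall>b\<in>A n. Lm n \<le> length (sigma_comp \<sigma> n b)"
      using directive_seqD(1)[OF ds] unfolding Lm_def by auto
    then obtain y where "\<And>\<nu>. shift_invariant_measure (generated_subshift A \<sigma>) \<nu> \<Longrightarrow>
        \<bar>measure \<nu> (cylinder 0 u) - (\<Sum>a\<in>A 0. y a * measure \<nu> (cylinder 0 [a]))\<bar> \<le> length u / Lm n"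
      using cylinder_frequency_approx[OF ds invertible \<open>u \<noteq> []\<close> \<open>0 < Lm n\<close>] by blast
    from this[OF \<mu>] this[OF \<mu>'] show ?thesis using letters by (simp add: abs_le_iff)
  qed
  then have "\<bar>measure \<mu> (cylinder 0 u) - measure \<mu>' (cylinder 0 u)\<bar> \<le> 0"
    using growing unfolding everywhere_growing_def Lm_def[symmetric] by (intro nonpos_of_le_divide_at_top)
  then show ?thesis by simp
qed

theorem corollary6p3:
  fixes A :: "nat \<Rightarrow> nat set" and \<sigma> :: directive and \<mu> \<mu>' :: "(int \<Rightarrow> nat) measure"
  assumes "directive_seq A \<sigma>"
    and "everywhere_growing A \<sigma>"
    and "finite_alphabet_rank A"
    and "\<forall>n. invertible_mat (incidence_mat (A (Suc n)) (A n) (\<sigma> n))"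
    and "invariant_measure_on (generated_subshift A \<sigma>) \<mu>"
    and "invariant_measure_on (generated_subshift A \<sigma>) \<mu>'"
    and "\<forall>a\<in>A 0. emeasure \<mu> (cyl a) = emeasure \<mu>' (cyl a)"
  shows "\<mu> = \<mu>'"
proof -
  interpret \<mu>: shift_invariant_measure "generated_subshift A \<sigma>" \<mu> by unfold_locales fact
  interpret \<mu>': shift_invariant_measure "generated_subshift A \<sigma>" \<mu>' by unfold_locales fact
  have "\<forall>a\<in>A 0. measure \<mu> (cylinder 0 [a]) = measure \<mu>' (cylinder 0 [a])"
    using assms(7) unfolding \<mu>.measure_cyl[symmetric] \<mu>'.measure_cyl[symmetric] by (simp add: measure_def)
  then show ?thesis
    using generated_subshift_measure_cylinder_eq[OF assms(1,2,4)]
      shift_invariant_measure_eqI \<mu>.shift_invariant_measure_axioms \<mu>'.shift_invariant_measure_axioms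
    by blast
qed

end
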